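(* Under a general RLCM with $J\times K$ binary $Q$-matrix $Q$, if $(Q,\boldsymbol\Theta,\boldsymbol p)$ are jointly generically identifiable then $Q$ is generically complete, i.e. $Q$ has $K$ rows which, after a permutation of these rows and of the columns, form a $K\times K$ matrix all of whose diagonal entries equal $1$.
   Context: A $Q$-matrix is a $J\times K$ binary matrix with rows $\boldsymbol q_j$. For $\boldsymbol\alpha,\boldsymbol q\in\{0,1\}^K$, $\boldsymbol\alpha\succeq\boldsymbol q$ means $\alpha_k\ge q_k$ for all $k$; $\odot$ is the elementwise product. RLCM: latent $\boldsymbol A\in\{0,1\}^K$ with $P(\boldsymbol A=\boldsymbol\alpha)=p_{\boldsymbol\alpha}>0$, $\sum p_{\boldsymbol\alpha}=1$; given $\boldsymbol A=\boldsymbol\alpha$, responses $R_1,\dots,R_J\in\{0,1\}$ independent with $P(R_j=1\mid\boldsymbol\alpha)=\theta_{j,\boldsymbol\alpha}$, $\boldsymbol\Theta=(\theta_{j,\boldsymbol\alpha})$; constraints: $\theta_{j,\boldsymbol\alpha}=\theta_{j,\boldsymbol\alpha'}$ if $\boldsymbol\alpha\odot\boldsymbol q_j=\boldsymbol\alpha'\odot\boldsymbol q_j$, and $\theta_{j,\boldsymbol\alpha}>\theta_{j,\boldsymbol\alpha'}$ if $\boldsymbol\alpha\succeq\boldsymbol q_j$, $\boldsymbol\alpha'\not\succeq\boldsymbol q_j$. In a general RLCM (e.g. GDINA: $\theta_{j,\boldsymbol\alpha}=\sum_{S\subseteq\{k:q_{j,k}=1\}}\beta_{j,S}\prod_{k\in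 S}\alpha_k$), apart from these constraints the item parameters are free (all main and interaction effects of required attributes); the parameter space is full-dimensional in $\mathbb R^m$. $(\bar Q,\bar{\boldsymbol\Theta},\bar{\boldsymbol p})\sim(Q,\boldsymbol\Theta,\boldsymbol p)$ means $\bar Q$ equals $Q$ up to column permutation and parameters coincide (after relabeling attributes). Joint generic identifiability: the set of $(\boldsymbol\Theta,\boldsymbol p)$ for which some $(\bar Q,\bar{\boldsymbol\Theta},\bar{\boldsymbol p})\not\sim(Q,\boldsymbol\Theta,\boldsymbol p)$ ($\bar Q$ any $J\times K$ binary matrix, valid parameters) gives the same distribution of $\boldsymbol R$ has Lebesgue measure zero in the parameter space. *)

theory Defs
  imports "HOL-Analysis.Analysis"
begin

text \<open>A J x K binary Q-matrix is Q :: nat => nat => bool, entries Q j k for j < J, k < K.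
  An attribute profile alpha in {0,1}^K is represented by the set of mastered attributes,
  a subset of {..<K}.  Then alpha >= q_j  iff  q_j is a subset of alpha, and
  alpha (.) q_j corresponds to the intersection.\<close>

definition qrow :: "nat \<Rightarrow> (nat \<Rightarrow> nat \<Rightarrow> bool) \<Rightarrow> nat \<Rightarrow> nat set" where
  "qrow K Q j = {k. k < K \<and> Q j k}"

definition valid_params ::
  "nat \<Rightarrow> nat \<Rightarrow> (nat \<Rightarrow> nat \<Rightarrow> bool) \<Rightarrow> (nat \<Rightarrow> nat set \<Rightarrow> real) \<Rightarrow> (nat set \<Rightarrow> real) \<Rightarrow> bool" where
  "valid_params J K Q \<Theta> p \<longleftrightarrow>
     (\<forall>\<alpha>\<in>Pow {..<K}. p \<alpha> > 0) \<and> (\<Sum>\<alpha>\<in>Pow {..<K}. p \<alpha>) = 1 \<and>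
     (\<forall>j<J. \<forall>\<alpha>\<in>Pow {..<K}. 0 \<le> \<Theta> j \<alpha> \<and> \<Theta> j \<alpha> \<le> 1) \<and>
     (\<forall>j<J. \<forall>\<alpha>\<in>Pow {..<K}. \<forall>\<alpha>'\<in>Pow {..<K}.
        \<alpha> \<inter> qrow K Q j = \<alpha>' \<inter> qrow K Q j \<longrightarrow> \<Theta> j \<alpha> = \<Theta> j \<alpha>') \<and>
     (\<forall>j<J. \<forall>\<alpha>\<in>Pow {..<K}. \<forall>\<alpha>'\<in>Pow {..<K}.
        qrow K Q j \<subseteq> \<alpha> \<and> \<not> qrow K Q j \<subseteq> \<alpha>' \<longrightarrow> \<Theta> j \<alpha> > \<Theta> j \<alpha>')"

text \<open>P(R = r), where the response vector r in {0,1}^J is given by the set of items with R_j = 1.\<close>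
definition resp_prob ::
  "nat \<Rightarrow> nat \<Rightarrow> (nat \<Rightarrow> nat set \<Rightarrow> real) \<Rightarrow> (nat set \<Rightarrow> real) \<Rightarrow> nat set \<Rightarrow> real" where
  "resp_prob J K \<Theta> p r =
     (\<Sum>\<alpha>\<in>Pow {..<K}. p \<alpha> * (\<Prod>j<J. if j \<in> r then \<Theta> j \<alpha> else 1 - \<Theta> j \<alpha>))"

definition same_dist ::
  "nat \<Rightarrow> nat \<Rightarrow> (nat \<Rightarrow> nat set \<Rightarrow> real) \<Rightarrow> (nat set \<Rightarrow> real) \<Rightarrow>
   (nat \<Rightarrow> nat set \<Rightarrow> real) \<Rightarrow> (nat set \<Rightarrow> real) \<Rightarrow> bool" where
  "same_dist J K \<Theta>1 p1 \<Theta>2 p2 \<longleftrightarrow> (\<forall>r\<in>Pow {..<J}. resp_prob J K \<Theta>1 p1 r = resp_prob J K \<Theta>2 p2 r)"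

definition model_equiv ::
  "nat \<Rightarrow> nat \<Rightarrow> (nat \<Rightarrow> nat \<Rightarrow> bool) \<Rightarrow> (nat \<Rightarrow> nat set \<Rightarrow> real) \<Rightarrow> (nat set \<Rightarrow> real) \<Rightarrow>
   (nat \<Rightarrow> nat \<Rightarrow> bool) \<Rightarrow> (nat \<Rightarrow> nat set \<Rightarrow> real) \<Rightarrow> (nat set \<Rightarrow> real) \<Rightarrow> bool" where
  "model_equiv J K Q' \<Theta>' p' Q \<Theta> p \<longleftrightarrow>
     (\<exists>\<sigma>. bij_betw \<sigma> {..<K} {..<K} \<and>
        (\<forall>j<J. \<forall>k<K. Q' j k = Q j (\<sigma> k)) \<and>
        (\<forall>j<J. \<forall>\<alpha>\<in>Pow {..<K}. \<Theta>' j \<alpha> = \<Theta> j (\<sigma> ` \<alpha>)) \<and>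
        (\<forall>\<alpha>\<in>Pow {..<K}. p' \<alpha> = p (\<sigma> ` \<alpha>)))"

text \<open>Free coordinates of the parameter space in R^m:
  theta_{j,S} for j < J and S a subset of q_j (the value of Theta j alpha for alpha with
  alpha \<inter> q_j = S), and p_alpha for all alpha except the full profile
  (whose proportion is determined by the sum-to-one constraint).\<close>
type_synonym coord = "(nat \<times> nat set) + nat set"

definition coord_index :: "nat \<Rightarrow> nat \<Rightarrow> (nat \<Rightarrow> nat \<Rightarrow> bool) \<Rightarrow> coord set" where
  "coord_index J K Q =
     Inl ` {(j, S). j < J \<and> S \<subseteq> qrow K Q j} \<union> Inr ` (Pow {..<K} - {{..<K}})"

definition theta_of :: "nat \<Rightarrow> (nat \<Rightarrow> nat \<Rightarrow> bool) \<Rightarrow> (coord \<Rightarrow> real) \<Rightarrow> nat \<Rightarrow> nat set \<Rightarrow> real" where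
  "theta_of K Q x j \<alpha> = x (Inl (j, \<alpha> \<inter> qrow K Q j))"

definition p_of :: "nat \<Rightarrow> (coord \<Rightarrow> real) \<Rightarrow> nat set \<Rightarrow> real" where
  "p_of K x \<alpha> = (if \<alpha> = {..<K} then 1 - (\<Sum>\<beta>\<in>Pow {..<K} - {{..<K}}. x (Inr \<beta>)) else x (Inr \<alpha>))"

definition param_measure :: "nat \<Rightarrow> nat \<Rightarrow> (nat \<Rightarrow> nat \<Rightarrow> bool) \<Rightarrow> (coord \<Rightarrow> real) measure" where
  "param_measure J K Q = PiM (coord_index J K Q) (\<lambda>_. lborel)"

definition param_space :: "nat \<Rightarrow> nat \<Rightarrow> (nat \<Rightarrow> nat \<Rightarrow> bool) \<Rightarrow> (coord \<Rightarrow> real) set" where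
  "param_space J K Q = {x \<in> space (param_measure J K Q). valid_params J K Q (theta_of K Q x) (p_of K x)}"

definition jointly_generically_identifiable :: "nat \<Rightarrow> nat \<Rightarrow> (nat \<Rightarrow> nat \<Rightarrow> bool) \<Rightarrow> bool" where
  "jointly_generically_identifiable J K Q \<longleftrightarrow>
     (\<exists>N \<in> null_sets (param_measure J K Q).
        {x \<in> param_space J K Q. \<exists>Q' \<Theta>' p'. valid_params J K Q' \<Theta>' p' \<and>
            same_dist J K \<Theta>' p' (theta_of K Q x) (p_of K x) \<and>
            \<not> model_equiv J K Q' \<Theta>' p' Q (theta_of K Q x) (p_of K x)} \<subseteq> N)"

definition generically_complete :: "nat \<Rightarrow> nat \<Rightarrow> (nat \<Rightarrow> nat \<Rightarrow> bool) \<Rightarrow> bool" where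
  "generically_complete J K Q \<longleftrightarrow>
     (\<exists>r c. inj_on r {..<K} \<and> r ` {..<K} \<subseteq> {..<J} \<and> bij_betw c {..<K} {..<K} \<and>
        (\<forall>i<K. Q (r i) (c i)))"

end

theory Submission
  imports Defs
begin

(* If Q is not generically complete, Hall's marriage theorem yields a set C of attributes
   that is measured by fewer than |C| items, say by the item set A.  Profiles inside C
   influence the responses only through the items of A, i.e. through 2^|A| response
   patterns, so the 2^|C| proportions of these profiles can be moved along a nonzero
   direction d that leaves the distribution of R unchanged; a small step p + t d keeps the
   proportions valid.  It changes the sum of the squared proportions, which is invariant
   under relabelling attributes, so every valid parameter is non-identifiable.  The valid
   parameters contain a box of positive measure, contradicting generic identifiability. *)

lemma hall_condition_remove_point:
  assumes fin: "finite I" "\<forall>i\<in>I. finite (N i)"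
    and surplus: "\<forall>C\<subseteq>I. C \<noteq> {} \<longrightarrow> C \<noteq> I \<longrightarrow> card C < card (\<Union>(N ` C))"
    and "i \<in> I"
  shows "\<forall>C\<subseteq>I - {i}. card C \<le> card (\<Union>((\<lambda>k. N k - {j}) ` C))"
proof (intro allI impI)
  fix C assume C: "C \<subseteq> I - {i}"
  show "card C \<le> card (\<Union>((\<lambda>k. N k - {j}) ` C))"
  proof (cases "C = {}")
    case False
    with C \<open>i \<in> I\<close> have "card C < card (\<Union>(N ` C))" using surplus by blast
    moreover have "finite (\<Union>(N ` C))" using C fin by (auto intro: finite_subset)
    moreover have "\<Union>((\<lambda>k. N k - {j}) ` C) = \<Union>(N ` C) - {j}" by auto
    ultimately show ?thesis by (simp add: card_Diff_singleton_if) arith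
  qed simp
qed

lemma hall_condition_remove_tight:
  assumes fin: "finite I" "\<forall>i\<in>I. finite (N i)"
    and hall: "\<forall>C\<subseteq>I. card C \<le> card (\<Union>(N ` C))"
    and "C \<subseteq> I" and tight: "card (\<Union>(N ` C)) = card C"
  shows "\<forall>D\<subseteq>I - C. card D \<le> card (\<Union>((\<lambda>k. N k - \<Union>(N ` C)) ` D))"
proof (intro allI impI)
  fix D assume D: "D \<subseteq> I - C"
  have finite_Union: "finite (\<Union>(N ` X))" if "X \<subseteq> I" for X
    using that fin by (auto intro: finite_subset)
  have finite: "finite D" "finite C" "finite (\<Union>(N ` D))" "finite (\<Union>(N ` C))"
    using D \<open>C \<subseteq> I\<close> fin(1) finite_Union by (auto intro: finite_subset)
  have "card D + card C = card (D \<union> C)"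
    using D finite by (subst card_Un_disjoint) auto
  also have "\<dots> \<le> card (\<Union>(N ` (D \<union> C)))"
    using D \<open>C \<subseteq> I\<close> by (intro hall[rule_format]) auto
  also have "\<dots> = card (\<Union>((\<lambda>k. N k - \<Union>(N ` C)) ` D)) + card (\<Union>(N ` C))"
  proof -
    have split: "\<Union>(N ` (D \<union> C)) = \<Union>((\<lambda>k. N k - \<Union>(N ` C)) ` D) \<union> \<Union>(N ` C)" by auto
    have "finite (\<Union>((\<lambda>k. N k - \<Union>(N ` C)) ` D))"
      using finite(3) by (rule finite_subset[rotated]) auto
    then show ?thesis unfolding split using finite(4) by (rule card_Un_disjoint) blast
  qed
  finally show "card D \<le> card (\<Union>((\<lambda>k. N k - \<Union>(N ` C)) ` D))" using tight by simp
qed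

lemma hall_marriage:
  fixes N :: "'a \<Rightarrow> 'b set"
  assumes "finite I" "\<forall>i\<in>I. finite (N i)" "\<forall>C\<subseteq>I. card C \<le> card (\<Union>(N ` C))"
  shows "\<exists>r. inj_on r I \<and> (\<forall>i\<in>I. r i \<in> N i)"
  using assms
proof (induction "card I" arbitrary: I N rule: less_induct)
  case less
  note fin = less.prems(1,2) and hall = less.prems(3)
  show ?case
  proof (cases "\<forall>C\<subseteq>I. C \<noteq> {} \<longrightarrow> C \<noteq> I \<longrightarrow> card C < card (\<Union>(N ` C))")
    case surplus: True
    show ?thesis
    proof (cases "I = {}")
      case False
      then obtain i where i: "i \<in> I" by auto
      with hall have "card {i} \<le> card (\<Union>(N ` {i}))" by blast
      then obtain j where j: "j \<in> N i" by fastforce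
      have "card (I - {i}) < card I" using fin i by (metis card_Diff1_less)
      then obtain r where r: "inj_on r (I - {i})" "\<forall>k\<in>I - {i}. r k \<in> N k - {j}"
        using less.hyps[of "I - {i}" "\<lambda>k. N k - {j}"] fin
          hall_condition_remove_point[OF fin surplus i] by auto
      have "inj_on (r(i := j)) (insert i (I - {i}))"
        using r by (auto simp: inj_on_def)
      then show ?thesis using r i j by (intro exI[of _ "r(i := j)"]) (auto simp: insert_absorb)
    qed simp
  next
    case False
    then obtain C where C: "C \<subseteq> I" "C \<noteq> {}" "C \<noteq> I" "card (\<Union>(N ` C)) \<le> card C"
      by (auto simp: not_less)
    define U where "U = \<Union>(N ` C)"
    have tight: "card U = card C" using hall C unfolding U_def by (simp add: le_antisym)
    have "card C < card I" "card (I - C) < card I"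
      using C fin(1) by (auto intro!: psubset_card_mono)
    moreover have "finite C" "finite (I - C)" "\<forall>k\<in>C. finite (N k)" "\<forall>k\<in>I - C. finite (N k - U)"
      using C(1) fin by (auto intro: finite_subset)
    moreover have "\<forall>D\<subseteq>C. card D \<le> card (\<Union>(N ` D))"
      using C(1) hall by blast
    moreover note hall_condition_remove_tight[OF fin hall C(1) tight[unfolded U_def], folded U_def]
    ultimately obtain r1 r2 where r1: "inj_on r1 C" "\<forall>k\<in>C. r1 k \<in> N k"
      and r2: "inj_on r2 (I - C)" "\<forall>k\<in>I - C. r2 k \<in> N k - U"
      using less.hyps by metis
    have "r1 ` C \<inter> r2 ` (I - C) = {}"
      using r1(2) r2(2) unfolding U_def by fastforce
    then have "inj_on (\<lambda>k. if k \<in> C then r1 k else r2 k) (C \<union> (I - C))"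
      using r1(1) r2(1) by (intro inj_on_disjoint_Un)
    moreover have "C \<union> (I - C) = I" using C(1) by blast
    ultimately show ?thesis
      using r1(2) r2(2) by (intro exI[of _ "\<lambda>k. if k \<in> C then r1 k else r2 k"]) auto
  qed
qed

definition measuring_items :: "nat \<Rightarrow> nat \<Rightarrow> (nat \<Rightarrow> nat \<Rightarrow> bool) \<Rightarrow> nat set \<Rightarrow> nat set" where
  "measuring_items J K Q C = {j. j < J \<and> qrow K Q j \<inter> C \<noteq> {}}"

lemma generically_complete_if_hall_condition:
  assumes "\<forall>C\<subseteq>{..<K}. card C \<le> card (measuring_items J K Q C)"
  shows "generically_complete J K Q"
proof -
  define N where "N k = {j. j < J \<and> Q j k}" for k
  have "\<Union>(N ` C) = measuring_items J K Q C" if "C \<subseteq> {..<K}" for C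
    using that unfolding N_def measuring_items_def qrow_def by auto
  with assms obtain r where r: "inj_on r {..<K}" "\<forall>k\<in>{..<K}. r k \<in> N k"
    using hall_marriage[of "{..<K}" N] unfolding N_def by auto
  then show ?thesis
    unfolding generically_complete_def N_def by (intro exI[of _ r] exI[of _ id]) auto
qed

lemma homogeneous_system_nontrivial_solution:
  fixes c :: "'e \<Rightarrow> 'u \<Rightarrow> real"
  assumes "finite E" "finite U" "card E < card U"
  shows "\<exists>x. (\<exists>u\<in>U. x u \<noteq> 0) \<and> (\<forall>e\<in>E. (\<Sum>u\<in>U. c e u * x u) = 0)"
  using assms
proof (induction E arbitrary: U c rule: finite_induct)
  case empty
  then obtain u where "u \<in> U" by fastforce
  then show ?case by (intro exI[of _ "\<lambda>v. if v = u then 1 else 0"]) auto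
next
  case (insert e E)
  show ?case
  proof (cases "\<forall>u\<in>U. c e u = 0")
    case True
    with insert show ?thesis by auto
  next
    case False
    then obtain u0 where u0: "u0 \<in> U" "c e u0 \<noteq> 0" by auto
    define U' where "U' = U - {u0}"
    define c' where "c' e' u = c e' u - c e' u0 / c e u0 * c e u" for e' u
    have "finite U'" "card E < card U'"
      using insert u0 unfolding U'_def by (auto simp: card_Diff_singleton)
    then obtain x' where x': "\<exists>u\<in>U'. x' u \<noteq> 0" "\<forall>e'\<in>E. (\<Sum>u\<in>U'. c' e' u * x' u) = 0"
      using insert.IH by blast
    define x where "x = x'(u0 := - (\<Sum>u\<in>U'. c e u * x' u) / c e u0)"
    have split: "(\<Sum>u\<in>U. g u * x u) = g u0 * x u0 + (\<Sum>u\<in>U'. g u * x' u)" for g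
    proof -
      have "(\<Sum>u\<in>U. g u * x u) = g u0 * x u0 + (\<Sum>u\<in>U'. g u * x u)"
        unfolding U'_def using u0 insert.prems(1) by (simp add: sum.remove)
      also have "(\<Sum>u\<in>U'. g u * x u) = (\<Sum>u\<in>U'. g u * x' u)"
        unfolding x_def U'_def by (intro sum.cong) auto
      finally show ?thesis .
    qed
    have "(\<Sum>u\<in>U. c e' u * x u) = 0" if "e' \<in> insert e E" for e'
    proof (cases "e' = e")
      case False
      with that have "(\<Sum>u\<in>U'. c' e' u * x' u) = 0" using x'(2) by auto
      then have "(\<Sum>u\<in>U'. c e' u * x' u) = c e' u0 / c e u0 * (\<Sum>u\<in>U'. c e u * x' u)"
        unfolding c'_def by (simp add: algebra_simps sum_subtractf sum_distrib_left)
      then show ?thesis using split[of "c e'"] u0 unfolding x_def by simp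
    qed (use split[of "c e"] u0 in \<open>simp add: x_def\<close>)
    moreover have "\<exists>u\<in>U. x u \<noteq> 0" using x'(1) unfolding x_def U'_def by auto
    ultimately show ?thesis by blast
  qed
qed

lemma sum_Pow_prod_Bernoulli:
  fixes a :: "'a \<Rightarrow> real"
  assumes "finite A"
  shows "(\<Sum>r\<in>Pow A. \<Prod>j\<in>A. if j \<in> r then a j else 1 - a j) = 1"
proof -
  have "(\<Prod>j\<in>A. if j \<in> r then a j else 1 - a j) = (\<Prod>j\<in>r. a j) * (\<Prod>j\<in>A - r. 1 - a j)"
    if "r \<in> Pow A" for r
    using that assms by (simp add: prod.If_cases Int_absorb1 Diff_eq)
  then have "(\<Sum>r\<in>Pow A. \<Prod>j\<in>A. if j \<in> r then a j else 1 - a j) = (\<Prod>j\<in>A. a j + (1 - a j))"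
    using prod_add[OF assms, of a "\<lambda>j. 1 - a j"] by simp
  also have "\<dots> = 1" by simp
  finally show ?thesis .
qed

lemma resp_prob_add_scaled:
  "resp_prob J K \<Theta> (\<lambda>\<alpha>. p \<alpha> + t * d \<alpha>) r = resp_prob J K \<Theta> p r + t * resp_prob J K \<Theta> d r"
  unfolding resp_prob_def by (simp add: algebra_simps sum.distrib sum_distrib_left)

lemma sum_resp_prob:
  "(\<Sum>r\<in>Pow {..<J}. resp_prob J K \<Theta> p r) = (\<Sum>\<alpha>\<in>Pow {..<K}. p \<alpha>)"
proof -
  have "(\<Sum>r\<in>Pow {..<J}. resp_prob J K \<Theta> p r)
      = (\<Sum>\<alpha>\<in>Pow {..<K}. p \<alpha> * (\<Sum>r\<in>Pow {..<J}. \<Prod>j<J. if j \<in> r then \<Theta> j \<alpha> else 1 - \<Theta> j \<alpha>))"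
    unfolding resp_prob_def sum_distrib_left by (rule sum.swap)
  then show ?thesis by (simp add: sum_Pow_prod_Bernoulli)
qed

lemma model_equiv_sum_eq:
  assumes "model_equiv J K Q' \<Theta>' p' Q \<Theta> p"
  shows "(\<Sum>\<alpha>\<in>Pow {..<K}. f (p' \<alpha>)) = (\<Sum>\<alpha>\<in>Pow {..<K}. f (p \<alpha>))"
proof -
  obtain \<sigma> where \<sigma>: "bij_betw \<sigma> {..<K} {..<K}" "\<forall>\<alpha>\<in>Pow {..<K}. p' \<alpha> = p (\<sigma> ` \<alpha>)"
    using assms unfolding model_equiv_def by blast
  have "(\<Sum>\<alpha>\<in>Pow {..<K}. f (p' \<alpha>)) = (\<Sum>\<alpha>\<in>Pow {..<K}. f (p (\<sigma> ` \<alpha>)))"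
    using \<sigma>(2) by simp
  also have "\<dots> = (\<Sum>\<alpha>\<in>Pow {..<K}. f (p \<alpha>))"
    using sum.reindex_bij_betw[OF bij_betw_Pow[OF \<sigma>(1)]] .
  finally show ?thesis .
qed

lemma perturbation_positive_and_sum_squares_ne:
  fixes p d :: "'a \<Rightarrow> real"
  assumes "finite A" "\<forall>\<alpha>\<in>A. p \<alpha> > 0" "\<exists>\<alpha>\<in>A. d \<alpha> \<noteq> 0"
  shows "\<exists>t>0. (\<forall>\<alpha>\<in>A. p \<alpha> + t * d \<alpha> > 0) \<and>
           (\<Sum>\<alpha>\<in>A. (p \<alpha> + t * d \<alpha>)\<^sup>2) \<noteq> (\<Sum>\<alpha>\<in>A. (p \<alpha>)\<^sup>2)"
proof -
  define S1 where "S1 = (\<Sum>\<alpha>\<in>A. p \<alpha> * d \<alpha>)"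
  define S2 where "S2 = (\<Sum>\<alpha>\<in>A. (d \<alpha>)\<^sup>2)"
  obtain \<alpha>0 where "\<alpha>0 \<in> A" "d \<alpha>0 \<noteq> 0" using assms(3) by blast
  then have "S2 > 0"
    unfolding S2_def using assms(1) by (intro sum_pos2) auto
  have square_sum: "(\<Sum>\<alpha>\<in>A. (p \<alpha> + t * d \<alpha>)\<^sup>2) = (\<Sum>\<alpha>\<in>A. (p \<alpha>)\<^sup>2) + t * (2 * S1 + t * S2)" for t
    unfolding S1_def S2_def
    by (simp add: power2_eq_square algebra_simps sum.distrib sum_distrib_left)
  have "\<forall>\<^sub>F t in at_right 0. \<forall>\<alpha>\<in>A. p \<alpha> + t * d \<alpha> > 0"
  proof (rule eventually_ball_finite[OF assms(1)], rule ballI)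
    fix \<alpha> assume "\<alpha> \<in> A"
    have "((\<lambda>t. p \<alpha> + t * d \<alpha>) \<longlongrightarrow> p \<alpha> + 0 * d \<alpha>) (at_right 0)"
      by (intro tendsto_intros)
    then show "\<forall>\<^sub>F t in at_right 0. p \<alpha> + t * d \<alpha> > 0"
      using assms(2) \<open>\<alpha> \<in> A\<close> by (auto dest: order_tendstoD(1))
  qed
  moreover have "\<forall>\<^sub>F t in at_right 0. 2 * S1 + t * S2 \<noteq> 0"
  proof (cases "S1 = 0")
    case True
    then show ?thesis
      using \<open>S2 > 0\<close> eventually_at_right_less[of "0::real"] by (auto elim: eventually_mono)
  next
    case False
    have "((\<lambda>t. 2 * S1 + t * S2) \<longlongrightarrow> 2 * S1 + 0 * S2) (at_right 0)"
      by (intro tendsto_intros)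
    then show ?thesis
      by (rule tendsto_imp_eventually_ne) (use False in simp)
  qed
  ultimately have "\<forall>\<^sub>F t in at_right 0. t > 0 \<and> (\<forall>\<alpha>\<in>A. p \<alpha> + t * d \<alpha> > 0) \<and> 2 * S1 + t * S2 \<noteq> 0"
    using eventually_at_right_less[of "0::real"] by eventually_elim auto
  then obtain t where "t > 0" "\<forall>\<alpha>\<in>A. p \<alpha> + t * d \<alpha> > 0" "2 * S1 + t * S2 \<noteq> 0"
    using eventually_happens'[OF trivial_limit_at_right_real] by blast
  then show ?thesis using square_sum by (intro exI[of _ t]) auto
qed

lemma exists_null_direction:
  assumes \<Theta>_inv: "\<forall>j<J. \<forall>\<alpha>\<in>Pow {..<K}. \<forall>\<alpha>'\<in>Pow {..<K}.
      \<alpha> \<inter> qrow K Q j = \<alpha>' \<inter> qrow K Q j \<longrightarrow> \<Theta> j \<alpha> = \<Theta> j \<alpha>'"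
    and C: "C \<subseteq> {..<K}" "card (measuring_items J K Q C) < card C"
  shows "\<exists>d. (\<exists>\<alpha>\<in>Pow {..<K}. d \<alpha> \<noteq> 0) \<and> (\<forall>r. resp_prob J K \<Theta> d r = 0)"
proof -
  define A where "A = measuring_items J K Q C"
  define f where "f r j \<alpha> = (if j \<in> r then \<Theta> j \<alpha> else 1 - \<Theta> j \<alpha>)" for r j \<alpha>
  have A: "finite A" "A \<subseteq> {..<J}" unfolding A_def measuring_items_def by auto
  have "finite C" using C(1) finite_subset by blast
  have "card (Pow A) < card (Pow C)"
    using A C \<open>finite C\<close> unfolding A_def by (simp add: card_Pow)
  then obtain d where d: "\<exists>\<gamma>\<in>Pow C. d \<gamma> \<noteq> 0" "\<forall>s\<in>Pow A. (\<Sum>\<gamma>\<in>Pow C. (\<Prod>j\<in>A. f s j \<gamma>) * d \<gamma>) = 0"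
    using homogeneous_system_nontrivial_solution[of "Pow A" "Pow C" "\<lambda>s \<gamma>. \<Prod>j\<in>A. f s j \<gamma>"]
      A(1) \<open>finite C\<close> by auto
  define d' where "d' \<alpha> = (if \<alpha> \<subseteq> C then d \<alpha> else 0)" for \<alpha>
  \<comment> \<open>Items outside A do not measure any attribute of C, so they cannot distinguish profiles inside C.\<close>
  have factor: "(\<Prod>j<J. f r j \<gamma>) = (\<Prod>j\<in>A. f (r \<inter> A) j \<gamma>) * (\<Prod>j\<in>{..<J} - A. f r j {})"
    if "\<gamma> \<subseteq> C" for r \<gamma>
  proof -
    have "\<Theta> j \<gamma> = \<Theta> j {}" if "j \<in> {..<J} - A" for j
      using that \<open>\<gamma> \<subseteq> C\<close> C(1) unfolding A_def measuring_items_def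
      by (intro \<Theta>_inv[rule_format]) auto
    then have "(\<Prod>j\<in>{..<J} - A. f r j \<gamma>) = (\<Prod>j\<in>{..<J} - A. f r j {})"
      unfolding f_def by (intro prod.cong) auto
    moreover have "(\<Prod>j\<in>A. f r j \<gamma>) = (\<Prod>j\<in>A. f (r \<inter> A) j \<gamma>)"
      unfolding f_def by (intro prod.cong) auto
    ultimately show ?thesis
      using prod.subset_diff[OF A(2), of "\<lambda>j. f r j \<gamma>"] by simp
  qed
  have "resp_prob J K \<Theta> d' r = 0" for r
  proof -
    have "resp_prob J K \<Theta> d' r = (\<Sum>\<gamma>\<in>Pow C. d \<gamma> * (\<Prod>j<J. f r j \<gamma>))"
      unfolding resp_prob_def f_def d'_def using C(1)
      by (intro sum.mono_neutral_cong_right) auto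
    also have "\<dots> = (\<Sum>\<gamma>\<in>Pow C. (\<Prod>j\<in>A. f (r \<inter> A) j \<gamma>) * d \<gamma>) * (\<Prod>j\<in>{..<J} - A. f r j {})"
      unfolding sum_distrib_right by (rule sum.cong) (auto simp: factor)
    also have "\<dots> = 0" using d(2) by simp
    finally show ?thesis .
  qed
  moreover have "\<exists>\<alpha>\<in>Pow {..<K}. d' \<alpha> \<noteq> 0" using d(1) C(1) unfolding d'_def by auto
  ultimately show ?thesis by blast
qed

lemma deficient_imp_not_identifiable:
  assumes valid: "valid_params J K Q \<Theta> p"
    and C: "C \<subseteq> {..<K}" "card (measuring_items J K Q C) < card C"
  shows "\<exists>p'. valid_params J K Q \<Theta> p' \<and> same_dist J K \<Theta> p' \<Theta> p \<and> \<not> model_equiv J K Q \<Theta> p' Q \<Theta> p"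
proof -
  have \<Theta>_inv: "\<forall>j<J. \<forall>\<alpha>\<in>Pow {..<K}. \<forall>\<alpha>'\<in>Pow {..<K}.
      \<alpha> \<inter> qrow K Q j = \<alpha>' \<inter> qrow K Q j \<longrightarrow> \<Theta> j \<alpha> = \<Theta> j \<alpha>'"
    using valid unfolding valid_params_def by (elim conjE) assumption
  have p_pos: "\<forall>\<alpha>\<in>Pow {..<K}. p \<alpha> > 0"
    using valid unfolding valid_params_def by (elim conjE) assumption
  have p_sum: "(\<Sum>\<alpha>\<in>Pow {..<K}. p \<alpha>) = 1"
    using valid unfolding valid_params_def by (elim conjE) assumption
  obtain d where d: "\<exists>\<alpha>\<in>Pow {..<K}. d \<alpha> \<noteq> 0" "\<forall>r. resp_prob J K \<Theta> d r = 0"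
    using exists_null_direction[OF \<Theta>_inv C] by blast
  have d_sum: "(\<Sum>\<alpha>\<in>Pow {..<K}. d \<alpha>) = 0"
    using sum_resp_prob[of J K \<Theta> d] d(2) by simp
  obtain t where t: "\<forall>\<alpha>\<in>Pow {..<K}. p \<alpha> + t * d \<alpha> > 0"
    "(\<Sum>\<alpha>\<in>Pow {..<K}. (p \<alpha> + t * d \<alpha>)\<^sup>2) \<noteq> (\<Sum>\<alpha>\<in>Pow {..<K}. (p \<alpha>)\<^sup>2)"
    using perturbation_positive_and_sum_squares_ne[OF _ p_pos d(1)] by auto
  define p' where "p' \<alpha> = p \<alpha> + t * d \<alpha>" for \<alpha>
  have "\<forall>\<alpha>\<in>Pow {..<K}. p' \<alpha> > 0" using t(1) unfolding p'_def .
  moreover have "(\<Sum>\<alpha>\<in>Pow {..<K}. p' \<alpha>) = 1"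
    using p_sum d_sum unfolding p'_def by (simp add: sum.distrib sum_distrib_left[symmetric])
  ultimately have "valid_params J K Q \<Theta> p'"
    using valid unfolding valid_params_def by (elim conjE) (intro conjI; assumption)
  moreover have "same_dist J K \<Theta> p' \<Theta> p"
    unfolding same_dist_def p'_def resp_prob_add_scaled using d(2) by simp
  moreover have "\<not> model_equiv J K Q \<Theta> p' Q \<Theta> p"
  proof
    assume "model_equiv J K Q \<Theta> p' Q \<Theta> p"
    from model_equiv_sum_eq[OF this, of power2] t(2) show False unfolding p'_def by simp
  qed
  ultimately show ?thesis by blast
qed

lemma (in product_sigma_finite) emeasure_PiM_PiE_pos:
  assumes "finite I" "\<And>i. i \<in> I \<Longrightarrow> A i \<in> sets (M i)" "\<And>i. i \<in> I \<Longrightarrow> emeasure (M i) (A i) > 0"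
  shows "emeasure (PiM I M) (PiE I A) > 0"
  using assms by (simp add: emeasure_PiM zero_less_iff_neq_zero)

definition param_box_side :: "nat \<Rightarrow> (nat \<Rightarrow> nat \<Rightarrow> bool) \<Rightarrow> coord \<Rightarrow> real set" where
  "param_box_side K Q i = (case i of
      Inl (j, S) \<Rightarrow> if S = qrow K Q j then {3/4..1} else {0..1/4}
    | Inr _ \<Rightarrow> {1 / 2 ^ Suc K..1 / 2 ^ K})"

definition param_box :: "nat \<Rightarrow> nat \<Rightarrow> (nat \<Rightarrow> nat \<Rightarrow> bool) \<Rightarrow> (coord \<Rightarrow> real) set" where
  "param_box J K Q = PiE (coord_index J K Q) (param_box_side K Q)"

lemma sum_p_of: "(\<Sum>\<alpha>\<in>Pow {..<K}. p_of K x \<alpha>) = 1"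
proof -
  have "(\<Sum>\<alpha>\<in>Pow {..<K}. p_of K x \<alpha>) = p_of K x {..<K} + (\<Sum>\<alpha>\<in>Pow {..<K} - {{..<K}}. p_of K x \<alpha>)"
    by (subst sum.remove[of _ "{..<K}"]) auto
  also have "(\<Sum>\<alpha>\<in>Pow {..<K} - {{..<K}}. p_of K x \<alpha>) = (\<Sum>\<alpha>\<in>Pow {..<K} - {{..<K}}. x (Inr \<alpha>))"
    unfolding p_of_def by (intro sum.cong) auto
  finally show ?thesis unfolding p_of_def by simp
qed

lemma p_of_pos:
  assumes "\<forall>\<beta>\<in>Pow {..<K} - {{..<K}}. x (Inr \<beta>) \<in> {1 / 2 ^ Suc K..1 / 2 ^ K}"
  shows "\<forall>\<alpha>\<in>Pow {..<K}. p_of K x \<alpha> > 0"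
proof -
  define P where "P = Pow {..<K} - {{..<K}}"
  have "(\<Sum>\<beta>\<in>P. x (Inr \<beta>)) \<le> (\<Sum>\<beta>\<in>P. 1 / 2 ^ K)"
    using assms unfolding P_def by (intro sum_mono) auto
  also have "\<dots> = (2 ^ K - 1) / 2 ^ K"
    unfolding P_def by (simp add: card_Diff_singleton card_Pow of_nat_diff)
  also have "\<dots> < 1" by simp
  finally have "p_of K x {..<K} > 0" unfolding p_of_def P_def by simp
  moreover have "p_of K x \<beta> > 0" if "\<beta> \<in> P" for \<beta>
  proof -
    have "(0::real) < 1 / 2 ^ Suc K" by simp
    also have "\<dots> \<le> x (Inr \<beta>)" using assms that unfolding P_def by simp
    finally show ?thesis using that unfolding p_of_def P_def by simp
  qed
  ultimately show ?thesis unfolding P_def by blast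
qed

lemma param_box_subset_param_space: "param_box J K Q \<subseteq> param_space J K Q"
proof
  fix x assume x: "x \<in> param_box J K Q"
  have theta: "theta_of K Q x j \<alpha> \<in> (if qrow K Q j \<subseteq> \<alpha> then {3/4..1} else {0..1/4})"
    if "j < J" for j \<alpha>
  proof -
    have "Inl (j, \<alpha> \<inter> qrow K Q j) \<in> coord_index J K Q"
      using that unfolding coord_index_def by auto
    from PiE_mem[OF x[unfolded param_box_def] this]
    have "theta_of K Q x j \<alpha> \<in> (if \<alpha> \<inter> qrow K Q j = qrow K Q j then {3/4..1} else {0..1/4})"
      unfolding theta_of_def param_box_side_def by simp
    moreover have "\<alpha> \<inter> qrow K Q j = qrow K Q j \<longleftrightarrow> qrow K Q j \<subseteq> \<alpha>" by blast
    ultimately show ?thesis by simp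
  qed
  have "x (Inr \<beta>) \<in> {1 / 2 ^ Suc K..1 / 2 ^ K}" if "\<beta> \<in> Pow {..<K} - {{..<K}}" for \<beta>
  proof -
    have "Inr \<beta> \<in> coord_index J K Q" using that unfolding coord_index_def by auto
    from PiE_mem[OF x[unfolded param_box_def] this] show ?thesis
      unfolding param_box_side_def by simp
  qed
  then have "\<forall>\<alpha>\<in>Pow {..<K}. p_of K x \<alpha> > 0" by (intro p_of_pos) blast
  moreover have "theta_of K Q x j \<alpha> \<in> {0..1}" if "j < J" for j \<alpha>
    using theta[OF that, of \<alpha>] by (auto split: if_splits)
  moreover have "theta_of K Q x j \<alpha>' < theta_of K Q x j \<alpha>"
    if "j < J" "qrow K Q j \<subseteq> \<alpha>" "\<not> qrow K Q j \<subseteq> \<alpha>'" for j \<alpha> \<alpha>'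
    using theta[OF that(1), of \<alpha>] theta[OF that(1), of \<alpha>'] that(2,3) by simp
  moreover have "x \<in> space (param_measure J K Q)"
    using x unfolding param_box_def param_measure_def space_PiM by (auto simp: PiE_iff)
  ultimately show "x \<in> param_space J K Q"
    unfolding param_space_def valid_params_def by (auto simp: theta_of_def sum_p_of)
qed

lemma param_box_measurable_pos:
  "param_box J K Q \<in> sets (param_measure J K Q)"
  "emeasure (param_measure J K Q) (param_box J K Q) > 0"
proof -
  have "{(j, S). j < J \<and> S \<subseteq> qrow K Q j} \<subseteq> {..<J} \<times> Pow {..<K}"
    unfolding qrow_def by auto
  then have "finite {(j, S). j < J \<and> S \<subseteq> qrow K Q j}"
    by (rule finite_subset) simp
  then have finite: "finite (coord_index J K Q)"
    unfolding coord_index_def by simp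
  have "(1::real) / 2 ^ Suc K < 1 / 2 ^ K" by (simp add: field_simps)
  then have sides: "param_box_side K Q i \<in> sets lborel" "emeasure lborel (param_box_side K Q i) > 0" for i
    unfolding param_box_side_def by (auto simp: emeasure_lborel_Icc split: sum.split prod.split)
  interpret product_sigma_finite "\<lambda>_. lborel" by standard
  show "param_box J K Q \<in> sets (param_measure J K Q)"
    unfolding param_box_def param_measure_def using finite sides(1) by (rule sets_PiM_I_finite)
  show "emeasure (param_measure J K Q) (param_box J K Q) > 0"
    unfolding param_box_def param_measure_def using finite sides by (rule emeasure_PiM_PiE_pos)
qed

lemma param_space_not_null:
  assumes "N \<in> null_sets (param_measure J K Q)"
  shows "\<not> param_space J K Q \<subseteq> N"
proof
  assume "param_space J K Q \<subseteq> N"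
  then have "param_box J K Q \<subseteq> N" using param_box_subset_param_space by blast
  then have "emeasure (param_measure J K Q) (param_box J K Q) \<le> emeasure (param_measure J K Q) N"
    using null_setsD2[OF assms] by (rule emeasure_mono)
  then show False
    using param_box_measurable_pos(2)[of J K Q] null_setsD1[OF assms] by simp
qed

theorem theorem5:
  fixes J K :: nat and Q :: "nat \<Rightarrow> nat \<Rightarrow> bool"
  assumes "jointly_generically_identifiable J K Q"
  shows "generically_complete J K Q"
proof (rule ccontr)
  assume "\<not> generically_complete J K Q"
  then obtain C where C: "C \<subseteq> {..<K}" "card (measuring_items J K Q C) < card C"
    using generically_complete_if_hall_condition by (meson not_le)
  obtain N where N: "N \<in> null_sets (param_measure J K Q)"
    and non_identifiable: "{x \<in> param_space J K Q. \<exists>Q' \<Theta>' p'. valid_params J K Q' \<Theta>' p' \<and>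
            same_dist J K \<Theta>' p' (theta_of K Q x) (p_of K x) \<and>
            \<not> model_equiv J K Q' \<Theta>' p' Q (theta_of K Q x) (p_of K x)} \<subseteq> N"
    using assms unfolding jointly_generically_identifiable_def by blast
  have "param_space J K Q \<subseteq> N"
  proof
    fix x assume x: "x \<in> param_space J K Q"
    then have "valid_params J K Q (theta_of K Q x) (p_of K x)"
      unfolding param_space_def by blast
    then show "x \<in> N"
      using deficient_imp_not_identifiable[OF _ C] non_identifiable x by blast
  qed
  then show False using param_space_not_null[OF N] by blast
qed

end
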